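(* Let $B_0$ be a finite Blaschke product, $\gamma\in\mathbb D$, and $m$ a positive integer. Then there exist $\zeta^*\in\mathbb D$ and a holomorphic map $f:\mathbb D\to\mathbb D$ such that $f=B_0\tilde g$ with $\tilde g$ holomorphic on $\mathbb D$, and $f(\zeta^*+h)=\gamma+O(h^m)$ as $h\to0$.
   Context: $\mathbb D$ is the open unit disc in $\mathbb C$. *)

theory Defs
  imports "HOL-Complex_Analysis.Complex_Analysis" "HOL-Library.Landau_Symbols"
begin

definition blaschke :: "complex \<Rightarrow> complex list \<Rightarrow> complex \<Rightarrow> complex" where
  "blaschke c as z = c * (\<Prod>a\<leftarrow>as. (z - a) / (1 - cnj a * z))"

definition finite_blaschke_product :: "(complex \<Rightarrow> complex) \<Rightarrow> bool" where
  "finite_blaschke_product B \<longleftrightarrow>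
     (\<exists>c as. norm c = 1 \<and> (\<forall>a\<in>set as. norm a < 1) \<and>
        (\<forall>z\<in>ball 0 1. B z = blaschke c as z))"

end

theory Submission
  imports Defs
begin

text \<open>
  Write \<open>\<phi>\<^sub>a\<close> for the disc automorphism \<open>z \<mapsto> (z - a) / (1 - cnj a z)\<close>.
  A non-constant finite Blaschke product \<open>B\<close> maps the disc into itself and \<open>|B|\<close> tends to 1
  at the boundary, so there is \<open>\<zeta>\<close> with \<open>|\<gamma>| < |w\<^sub>0|\<^sup>m\<close> for \<open>w\<^sub>0 = B \<zeta>\<close>.
  Then \<open>c = -\<gamma> / (-w\<^sub>0)\<^sup>m\<close> lies in the disc and \<open>\<Phi> = \<phi>\<^bsub>-\<gamma>\<^esub> \<circ> (c \<phi>\<^bsub>w\<^sub>0\<^esub>\<^sup>m)\<close> is a self-map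
  of the disc with \<open>\<Phi> 0 = 0\<close> and \<open>\<Phi> - \<gamma>\<close> vanishing to order \<open>m\<close> at \<open>w\<^sub>0\<close>.
  Hence \<open>\<Phi> w = w \<Psi> w\<close>, and \<open>f = \<Phi> \<circ> B = B \<cdot> (\<Psi> \<circ> B)\<close> takes the value \<open>\<gamma>\<close> to order \<open>m\<close> at \<open>\<zeta>\<close>.
  A constant \<open>B\<close> is trivial.
\<close>

lemma bigo_nhdsI:
  fixes f :: "'a::topological_space \<Rightarrow> 'b::real_normed_field"
  assumes "f \<in> O[at a](g)" and "f a = 0"
  shows "f \<in> O[nhds a](g)"
proof -
  obtain C where "C > 0" and "eventually (\<lambda>x. norm (f x) \<le> C * norm (g x)) (at a)"
    using assms(1) by (elim landau_o.bigE)
  then have "eventually (\<lambda>x. norm (f x) \<le> C * norm (g x)) (nhds a)"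
    using assms(2) by (auto simp: eventually_at_filter elim!: eventually_mono)
  then show ?thesis by (intro landau_o.bigI[OF \<open>C > 0\<close>])
qed

lemma field_differentiable_imp_bigo_nhds:
  fixes G :: "'a::real_normed_field \<Rightarrow> 'a"
  assumes "G field_differentiable (at a)"
  shows "(\<lambda>x. G x - G a) \<in> O[nhds a](\<lambda>x. x - a)"
proof (rule bigo_nhdsI)
  obtain D where "(G has_field_derivative D) (at a)"
    using assms by (auto simp: field_differentiable_def)
  then have "((\<lambda>x. (G x - G a) / (x - a)) \<longlongrightarrow> D) (at a)"
    by (simp add: has_field_derivative_iff)
  then show "(\<lambda>x. G x - G a) \<in> O[at a](\<lambda>x. x - a)"
    by (rule bigoI_tendsto) (simp add: eventually_at_filter)
qed simp

lemma bigo_nhds_compose_power: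
  fixes F G :: "'a::real_normed_field \<Rightarrow> 'a"
  assumes F: "(\<lambda>w. F w - c) \<in> O[nhds b](\<lambda>w. (w - b) ^ k)"
    and G: "(\<lambda>z. G z - b) \<in> O[nhds a](\<lambda>z. (z - a) ^ l)"
    and "isCont G a" and "G a = b"
  shows "(\<lambda>z. F (G z) - c) \<in> O[nhds a](\<lambda>z. (z - a) ^ (l * k))"
proof -
  have "filterlim G (nhds b) (nhds a)"
    using assms(3,4) tendsto_at_iff_tendsto_nhds by (auto simp: isCont_def)
  with F have "(\<lambda>z. F (G z) - c) \<in> O[nhds a](\<lambda>z. (G z - b) ^ k)"
    by (rule landau_o.big.compose)
  also have "(\<lambda>z. (G z - b) ^ k) \<in> O[nhds a](\<lambda>z. ((z - a) ^ l) ^ k)"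
    using G by (rule landau_o.big_power)
  finally show ?thesis by (simp add: power_mult)
qed

lemma bigo_nhds_shift_at_0:
  fixes f g :: "'a::real_normed_field \<Rightarrow> 'a"
  assumes "f \<in> O[nhds a](g)"
  shows "(\<lambda>h. f (a + h)) \<in> O[at 0](\<lambda>h. g (a + h))"
proof -
  have "filterlim (\<lambda>h. a + h) (nhds a) (at 0)"
    using tendsto_add[OF tendsto_const tendsto_ident_at, of a 0] by simp
  with assms show ?thesis
    by (rule landau_o.big.compose)
qed

lemma holomorphic_factor_zero:
  assumes "\<Phi> holomorphic_on S" and "open S" and "\<Phi> a = 0"
  shows "\<exists>\<Psi>. \<Psi> holomorphic_on S \<and> (\<forall>w\<in>S. \<Phi> w = (w - a) * \<Psi> w)"
proof -
  define \<Psi> where "\<Psi> w = (if w = a then deriv \<Phi> a else (\<Phi> w - \<Phi> a) / (w - a))" for w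
  have "\<Psi> holomorphic_on S"
    unfolding \<Psi>_def using assms(1,2) by (rule pole_lemma_open)
  moreover have "\<Phi> w = (w - a) * \<Psi> w" for w
    using assms(3) by (simp add: \<Psi>_def)
  ultimately show ?thesis by blast
qed

lemma blaschke_Nil [simp]: "blaschke c [] z = c"
  by (simp add: blaschke_def)

lemma blaschke_Cons: "blaschke c (a # as) z = Moebius_function 0 a z * blaschke c as z"
  by (simp add: blaschke_def Moebius_function_simple)

lemma holomorphic_on_blaschke:
  assumes "\<forall>a\<in>set as. norm a < 1"
  shows "blaschke c as holomorphic_on ball 0 1"
  using assms
proof (induction as)
  case (Cons a as)
  then show ?case
    unfolding blaschke_Cons by (intro holomorphic_intros Moebius_function_holomorphic) auto
qed (simp add: blaschke_def[abs_def])

lemma norm_blaschke_le_1: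
  assumes "norm c = 1" and "\<forall>a\<in>set as. norm a < 1" and "norm z < 1"
  shows "norm (blaschke c as z) \<le> 1"
  using assms(2)
proof (induction as)
  case (Cons a as)
  then have "norm (Moebius_function 0 a z) \<le> 1"
    using assms(3) by (intro less_imp_le Moebius_function_norm_lt_1) auto
  with Cons show ?case
    by (simp add: blaschke_Cons norm_mult mult_le_one)
qed (simp add: assms(1))

lemma norm_blaschke_less_1:
  assumes "norm c = 1" and "\<forall>a\<in>set as. norm a < 1" and "as \<noteq> []" and "norm z < 1"
  shows "norm (blaschke c as z) < 1"
proof -
  obtain a as' where as: "as = a # as'"
    using assms(3) by (cases as) auto
  have "norm (Moebius_function 0 a z) < 1"
    using assms(2,4) as by (intro Moebius_function_norm_lt_1) auto
  moreover have "norm (blaschke c as' z) \<le> 1"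
    using assms as by (intro norm_blaschke_le_1) auto
  ultimately have "norm (Moebius_function 0 a z) * norm (blaschke c as' z) < 1"
    using mult_right_le_one_le[of "norm (Moebius_function 0 a z)" "norm (blaschke c as' z)"]
    by simp
  then show ?thesis
    by (simp add: as blaschke_Cons norm_mult)
qed

lemma isCont_blaschke:
  assumes "\<forall>a\<in>set as. norm a < 1" and "norm z \<le> 1"
  shows "isCont (blaschke c as) z"
  using assms(1)
proof (induction as)
  case (Cons a as)
  have "norm (cnj a * z) < 1"
    using Cons.prems assms(2) mult_right_le_one_le[of "norm a" "norm z"]
    by (simp add: norm_mult)
  then have "1 - cnj a * z \<noteq> 0"
    by auto
  with Cons show ?case
    unfolding blaschke_Cons[abs_def] Moebius_function_simple by (intro continuous_intros) auto
qed (simp add: blaschke_def[abs_def])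

lemma norm_blaschke_eq_1:
  assumes "norm c = 1" and "\<forall>a\<in>set as. norm a < 1" and "norm z = 1"
  shows "norm (blaschke c as z) = 1"
  using assms(2)
proof (induction as)
  case (Cons a as)
  have "1 - cnj a * z = z * cnj (z - a)"
    using complex_norm_square[of z] assms(3) by (simp add: algebra_simps)
  then have "norm (1 - cnj a * z) = norm (z - a)"
    using assms(3) by (simp only: norm_mult complex_mod_cnj)
  moreover have "z \<noteq> a"
    using Cons.prems assms(3) by auto
  ultimately have "norm (Moebius_function 0 a z) = 1"
    using assms(3) by (simp add: Moebius_function_simple norm_divide norm_mult)
  with Cons show ?case
    by (simp add: blaschke_Cons norm_mult)
qed (simp add: assms(1))

lemma ex_norm_blaschke_greater:
  assumes "norm c = 1" and "\<forall>a\<in>set as. norm a < 1" and "t < 1"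
  shows "\<exists>\<zeta>\<in>ball 0 1. t < norm (blaschke c as \<zeta>)"
proof -
  have "isCont (blaschke c as) (of_real 1)"
    using assms(2) by (intro isCont_blaschke) auto
  then have "isCont (\<lambda>r. blaschke c as (of_real r)) 1"
    by (rule isCont_o2[OF continuous_of_real[OF continuous_ident]])
  then have "isCont (\<lambda>r. norm (blaschke c as (of_real r))) 1"
    by (rule isCont_norm)
  then have "((\<lambda>r. norm (blaschke c as (of_real r))) \<longlongrightarrow> 1) (at 1)"
    using norm_blaschke_eq_1[OF assms(1,2), of 1] by (simp add: isCont_def)
  then have "((\<lambda>r. norm (blaschke c as (of_real r))) \<longlongrightarrow> 1) (at_left 1)"
    by (rule tendsto_within_subset) simp
  then have "eventually (\<lambda>r. t < norm (blaschke c as (of_real r))) (at_left 1)"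
    using assms(3) by (rule order_tendstoD)
  moreover have "eventually (\<lambda>r. 0 < r \<and> r < (1::real)) (at_left 1)"
    using eventually_at_left_real[of 0 1] by simp
  ultimately have "eventually (\<lambda>r. t < norm (blaschke c as (of_real r)) \<and> 0 < r \<and> r < 1) (at_left 1)"
    by (rule eventually_conj)
  then obtain r where "t < norm (blaschke c as (of_real r))" and "0 < r" "r < 1"
    using eventually_happens'[of "at_left (1::real)"] by auto
  then show ?thesis
    by (intro bexI[of _ "of_real r"]) auto
qed

lemma norm_mult_Moebius_power_less_1:
  assumes "norm c < 1" and "norm w0 < 1" and "norm w < 1"
  shows "norm (c * Moebius_function 0 w0 w ^ m) < 1"
proof -
  have "norm (Moebius_function 0 w0 w) < 1"
    using assms(2,3) by (rule Moebius_function_norm_lt_1)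
  then have "norm (Moebius_function 0 w0 w ^ m) \<le> 1"
    by (simp add: norm_power power_le_one)
  then show ?thesis
    using assms(1) mult_right_le_one_le[of "norm c" "norm (Moebius_function 0 w0 w ^ m)"]
    by (simp add: norm_mult)
qed

lemma Moebius_power_bigo_nhds:
  assumes "norm w0 < 1"
  shows "(\<lambda>w. Moebius_function 0 w0 w ^ m) \<in> O[nhds w0](\<lambda>w. (w - w0) ^ m)"
proof -
  have "Moebius_function 0 w0 field_differentiable (at w0)"
    using Moebius_function_holomorphic[OF assms] assms
    by (intro holomorphic_on_imp_differentiable_at) auto
  then have "(\<lambda>w. Moebius_function 0 w0 w) \<in> O[nhds w0](\<lambda>w. w - w0)"
    using field_differentiable_imp_bigo_nhds by (fastforce simp: Moebius_function_eq_zero)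
  then show ?thesis
    by (rule landau_o.big_power)
qed

lemma disc_self_map_taking_value_to_order:
  fixes w0 \<gamma> :: complex
  assumes "norm w0 < 1" and "norm \<gamma> < norm w0 ^ m" and "m > 0"
  shows "\<exists>\<Phi>. \<Phi> holomorphic_on ball 0 1 \<and> \<Phi> ` ball 0 1 \<subseteq> ball 0 1 \<and> \<Phi> 0 = 0 \<and>
             (\<lambda>w. \<Phi> w - \<gamma>) \<in> O[nhds w0](\<lambda>w. (w - w0) ^ m)"
proof -
  have "w0 \<noteq> 0"
    using assms(2,3) by (auto simp: power_0_left)
  \<comment> \<open>chosen so that \<open>U 0 = - \<gamma>\<close>, whence \<open>M (U 0) = 0\<close>\<close>
  define c where "c = - \<gamma> / (- w0) ^ m"
  have "norm c < 1"
    using assms(2) \<open>w0 \<noteq> 0\<close> by (simp add: c_def norm_divide norm_power)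
  define U where "U w = c * Moebius_function 0 w0 w ^ m" for w
  define M where "M = Moebius_function 0 (- \<gamma>)"
  have "norm \<gamma> < 1"
    using assms(1,2) power_le_one[of "norm w0" m] by simp
  have U_disc: "norm (U w) < 1" if "norm w < 1" for w
    unfolding U_def using \<open>norm c < 1\<close> assms(1) that by (rule norm_mult_Moebius_power_less_1)
  have U_hol: "U holomorphic_on ball 0 1"
    unfolding U_def using assms(1) by (intro holomorphic_intros Moebius_function_holomorphic)
  have M_hol: "M holomorphic_on ball 0 1"
    unfolding M_def using \<open>norm \<gamma> < 1\<close> by (intro Moebius_function_holomorphic) simp
  have "U 0 = - \<gamma>"
    using \<open>w0 \<noteq> 0\<close> by (simp add: U_def c_def Moebius_function_of_zero)
  have "U w0 = 0"
    using assms(3) by (simp add: U_def Moebius_function_eq_zero)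
  have "M 0 = \<gamma>"
    by (simp add: M_def Moebius_function_of_zero)
  have "U \<in> O[nhds w0](\<lambda>w. (w - w0) ^ m)"
    unfolding U_def[abs_def] using Moebius_power_bigo_nhds[OF assms(1)] by simp
  moreover have "(\<lambda>u. M u - M 0) \<in> O[nhds 0](\<lambda>u. (u - 0) ^ 1)"
    using field_differentiable_imp_bigo_nhds[of M 0] M_hol
    by (simp add: holomorphic_on_imp_differentiable_at)
  moreover have "isCont U w0"
    using U_hol assms(1)
    by (intro field_differentiable_imp_continuous_at holomorphic_on_imp_differentiable_at) auto
  ultimately have "(\<lambda>w. M (U w) - \<gamma>) \<in> O[nhds w0](\<lambda>w. (w - w0) ^ m)"
    using bigo_nhds_compose_power[of M "M 0" 0 1 U w0 m] \<open>U w0 = 0\<close> \<open>M 0 = \<gamma>\<close> by simp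
  moreover have "(\<lambda>w. M (U w)) holomorphic_on ball 0 1"
    using holomorphic_on_compose_gen[OF U_hol M_hol] U_disc by (force simp: o_def)
  moreover have "(\<lambda>w. M (U w)) ` ball 0 1 \<subseteq> ball 0 1"
    using U_disc \<open>norm \<gamma> < 1\<close> by (auto simp: M_def Moebius_function_norm_lt_1)
  moreover have "M (U 0) = 0"
    using \<open>U 0 = - \<gamma>\<close> by (simp add: M_def Moebius_function_eq_zero)
  ultimately show ?thesis by blast
qed

lemma factored_disc_map_taking_value_to_order:
  fixes B :: "complex \<Rightarrow> complex" and \<gamma> :: complex
  assumes B_hol: "B holomorphic_on ball 0 1" and B_disc: "B ` ball 0 1 \<subseteq> ball 0 1"
    and B_sup: "\<And>t. t < 1 \<Longrightarrow> \<exists>\<zeta>\<in>ball 0 1. t < norm (B \<zeta>)"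
    and "norm \<gamma> < 1" and "m > 0"
  shows "\<exists>\<zeta>\<in>ball 0 1. \<exists>f g.
           f holomorphic_on ball 0 1 \<and> f ` ball 0 1 \<subseteq> ball 0 1 \<and>
           g holomorphic_on ball 0 1 \<and> (\<forall>z\<in>ball 0 1. f z = B z * g z) \<and>
           (\<lambda>h. f (\<zeta> + h) - \<gamma>) \<in> O[at 0](\<lambda>h. h ^ m)"
proof -
  obtain \<zeta> where \<zeta>: "\<zeta> \<in> ball 0 1" and "root m (norm \<gamma>) < norm (B \<zeta>)"
    using B_sup[of "root m (norm \<gamma>)"] assms(4,5) by auto
  then have "norm \<gamma> < norm (B \<zeta>) ^ m"
    using power_strict_mono[of "root m (norm \<gamma>)" "norm (B \<zeta>)" m] assms(5) by simp
  moreover have "norm (B \<zeta>) < 1"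
    using B_disc \<zeta> by fastforce
  ultimately obtain \<Phi> where \<Phi>_hol: "\<Phi> holomorphic_on ball 0 1"
    and \<Phi>_disc: "\<Phi> ` ball 0 1 \<subseteq> ball 0 1" and "\<Phi> 0 = 0"
    and \<Phi>_order: "(\<lambda>w. \<Phi> w - \<gamma>) \<in> O[nhds (B \<zeta>)](\<lambda>w. (w - B \<zeta>) ^ m)"
    using disc_self_map_taking_value_to_order assms(5) by blast
  obtain \<Psi> where \<Psi>_hol: "\<Psi> holomorphic_on ball 0 1" and \<Phi>_\<Psi>: "\<forall>w\<in>ball 0 1. \<Phi> w = w * \<Psi> w"
    using holomorphic_factor_zero[OF \<Phi>_hol _ \<open>\<Phi> 0 = 0\<close>] by auto
  have "B field_differentiable (at \<zeta>)"
    using B_hol \<zeta> by (intro holomorphic_on_imp_differentiable_at) auto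
  then have "(\<lambda>z. \<Phi> (B z) - \<gamma>) \<in> O[nhds \<zeta>](\<lambda>z. (z - \<zeta>) ^ m)"
    using bigo_nhds_compose_power[OF \<Phi>_order, of B \<zeta> 1]
    by (simp add: field_differentiable_imp_bigo_nhds field_differentiable_imp_continuous_at)
  then have "(\<lambda>h. \<Phi> (B (\<zeta> + h)) - \<gamma>) \<in> O[at 0](\<lambda>h. h ^ m)"
    using bigo_nhds_shift_at_0 by fastforce
  moreover have "(\<lambda>z. \<Phi> (B z)) holomorphic_on ball 0 1" "(\<lambda>z. \<Psi> (B z)) holomorphic_on ball 0 1"
    using holomorphic_on_compose_gen[OF B_hol _ B_disc] \<Phi>_hol \<Psi>_hol by (auto simp: o_def)
  moreover have "(\<lambda>z. \<Phi> (B z)) ` ball 0 1 \<subseteq> ball 0 1"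
    using B_disc \<Phi>_disc by auto
  moreover have "\<forall>z\<in>ball 0 1. \<Phi> (B z) = B z * \<Psi> (B z)"
    using B_disc \<Phi>_\<Psi> by auto
  ultimately show ?thesis
    using \<zeta> by blast
qed

theorem mainTheorem9:
  fixes B0 :: "complex \<Rightarrow> complex" and \<gamma> :: complex and m :: nat
  assumes "finite_blaschke_product B0"
    and "\<gamma> \<in> ball 0 1"
    and "m > 0"
  shows "\<exists>\<zeta>\<in>ball 0 1. \<exists>f g.
           f holomorphic_on ball 0 1 \<and> f ` ball 0 1 \<subseteq> ball 0 1 \<and>
           g holomorphic_on ball 0 1 \<and> (\<forall>z\<in>ball 0 1. f z = B0 z * g z) \<and>
           (\<lambda>h. f (\<zeta> + h) - \<gamma>) \<in> O[at 0](\<lambda>h. h ^ m)"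
proof -
  obtain c as where c: "norm c = 1" and as: "\<forall>a\<in>set as. norm a < 1"
    and B0: "\<forall>z\<in>ball 0 1. B0 z = blaschke c as z"
    using assms(1) unfolding finite_blaschke_product_def by blast
  show ?thesis
  proof (cases "as = []")
    case True
    then have "\<forall>z\<in>ball 0 1. \<gamma> = B0 z * (\<gamma> / c)"
      using B0 c by auto
    then show ?thesis
      using assms(2) by (intro bexI[of _ 0] exI[of _ "\<lambda>_. \<gamma>"] exI[of _ "\<lambda>_. \<gamma> / c"]) auto
  next
    case False
    have "B0 holomorphic_on ball 0 1"
      using holomorphic_on_blaschke[OF as] B0 by (metis holomorphic_cong)
    moreover have "B0 ` ball 0 1 \<subseteq> ball 0 1"
      using norm_blaschke_less_1[OF c as False] B0 by auto
    moreover have "\<exists>\<zeta>\<in>ball 0 1. t < norm (B0 \<zeta>)" if "t < 1" for t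
      using ex_norm_blaschke_greater[OF c as that] B0 by auto
    ultimately show ?thesis
      using assms(2,3) by (intro factored_disc_map_taking_value_to_order) auto
  qed
qed

end
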